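(* For all $u\le v\in\mathbb{Z}^2$ and $\lambda\in(0,1)$: on the event $E_{\rightarrow}(\lambda;u,v)$, the path $\pi_-(u,v)$ is above $\pi_-(\lambda;u,v)$; and on the event $E_{\uparrow}(\lambda;u,v)$, the path $\pi_+(\lambda;u,v)$ is above $\pi_+(u,v)$.
   Context: Fix $p\in(0,1)$; bulk weights $(\omega_x)_{x\in\mathbb{Z}^2}$ i.i.d. with $\mathbb{P}(\omega_x=k)=p(1-p)^k$, $k\ge0$. $\mathbf{e}_1=(1,0),\mathbf{e}_2=(0,1),\mathbf{e}_+=(1,1)$; $u\le v$ coordinatewise; $R_{u,v}=[u_1,v_1]\times[u_2,v_2]$; $H_x=\mathbb{R}\times\{x_2\}$, $V_x=\{x_1\}\times\mathbb{R}$. Directed paths use steps $\mathbf{e}_1,\mathbf{e}_2$; $T(x,y)$ is the maximal weight $\sum_{z\in\gamma}\omega_z$ over directed paths from $x$ to $y$. Boundary weights for $\lambda\in(0,1)$: let $q(\lambda)=\frac{p\lambda+p\sqrt{(1-p)\lambda(1-\lambda)}}{1-p+p\lambda+2\sqrt{(1-p)\lambda(1-\lambda)}}$, $p_H=q(\lambda)$, $p_V=1-\frac{1-p}{1-q(\lambda)}$. For a base vertex $u$, take $(\omega^V_{u+j\mathbf{e}_2}(\lambda))_{j\in\mathbb{Z}}$ i.i.d. geometric with parameter $p_V$ independent of the bulk, set $L(u)=0$, $L(u+j\mathbf{e}_2)-L(u+(j-1)\mathbf{e}_2)=\omega^V_{u+j\mathbf{e}_2}(\lambda)$, for $x\in u+\mathbb{Z}_{>0}\times\mathbb{Z}$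 let $L(x)=\sup_{j\le x_2-u_2}[L(u+j\mathbf{e}_2)+T(u+\mathbf{e}_1+j\mathbf{e}_2,x)]$, and $\omega^H_x(\lambda)=L(x)-L(x-\mathbf{e}_1)$, $\omega^V_x(\lambda)=L(x)-L(x-\mathbf{e}_2)$. The law of $(\omega_x,\omega^H_x(\lambda),\omega^V_x(\lambda))$ converges as $u=(-m,-m)$, $m\to\infty$, to a law on all of $\mathbb{Z}^2$ whose restriction to each $u+\mathbb{Z}_{\ge0}^2$ agrees with the construction based at $u$; we work under this full-plane law. For a directed path $\gamma$ from $x$ to $y$, $T(\lambda;\gamma)=\sum_{z\in\gamma\cap H_x\setminus\{x\}}\omega^H_z(\lambda)+\sum_{z\in\gamma\cap V_x\setminus\{x\}}\omega^V_z(\lambda)+\sum_{z\in\gamma\cap R_{x+\mathbf{e}_+,y}}\omega_z$; $T(\lambda;x,y)$ is its maximum over directed paths from $x$ to $y$, and maximizers are $\lambda$-geodesics. A path $\gamma$ is above $\gamma'$ if for every vertical line $V$ meeting both, $\min(\gamma\cap V)\ge\min(\gamma'\cap V)$. $\pi_+(u,v)$, $\pi_-(u,v)$ are the upmost (above all others) and downmost geodesics for $T(u,v)$, and $\pi_\pm(\lambda;u,v)$ the analogous $\lambda$-geodesics. $E_{\rightarrow}(\lambda;u,v)=\{u+\mathbf{e}_1\in\pi_-(\lambda;u,v)\}$, $E_{\uparrow}(\lambda;u,v)=\{u+\mathbf{e}_2\in\pi_+(\lambda;u,v)\}$. *)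

theory Defs
  imports Main
begin

type_synonym pt = "int \<times> int"

definition cle :: "pt \<Rightarrow> pt \<Rightarrow> bool" where
  "cle u v \<longleftrightarrow> fst u \<le> fst v \<and> snd u \<le> snd v"

definition e1 :: pt where "e1 = (1, 0)"
definition e2 :: pt where "e2 = (0, 1)"

definition padd :: "pt \<Rightarrow> pt \<Rightarrow> pt" where
  "padd x y = (fst x + fst y, snd x + snd y)"

definition dpath :: "pt list \<Rightarrow> pt \<Rightarrow> pt \<Rightarrow> bool" where
  "dpath \<gamma> x y \<longleftrightarrow> \<gamma> \<noteq> [] \<and> hd \<gamma> = x \<and> last \<gamma> = y \<and>
     (\<forall>i. Suc i < length \<gamma> \<longrightarrow>
        \<gamma> ! Suc i = padd (\<gamma> ! i) e1 \<or> \<gamma> ! Suc i = padd (\<gamma> ! i) e2)"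

definition pweight :: "(pt \<Rightarrow> nat) \<Rightarrow> pt list \<Rightarrow> int" where
  "pweight \<omega> \<gamma> = (\<Sum>z\<in>set \<gamma>. int (\<omega> z))"

definition LPP :: "(pt \<Rightarrow> nat) \<Rightarrow> pt \<Rightarrow> pt \<Rightarrow> int" where
  "LPP \<omega> x y = Max (pweight \<omega> ` {\<gamma>. dpath \<gamma> x y})"

definition lweight :: "(pt \<Rightarrow> nat) \<Rightarrow> (pt \<Rightarrow> int) \<Rightarrow> (pt \<Rightarrow> int) \<Rightarrow> pt \<Rightarrow> pt \<Rightarrow> pt list \<Rightarrow> int" where
  "lweight \<omega> \<omega>H \<omega>V x y \<gamma> =
     (\<Sum>z\<in>(set \<gamma> \<inter> {z. snd z = snd x}) - {x}. \<omega>H z)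
   + (\<Sum>z\<in>(set \<gamma> \<inter> {z. fst z = fst x}) - {x}. \<omega>V z)
   + (\<Sum>z\<in>set \<gamma> \<inter> {z. fst x + 1 \<le> fst z \<and> fst z \<le> fst y \<and> snd x + 1 \<le> snd z \<and> snd z \<le> snd y}.
        int (\<omega> z))"

definition geodesic :: "(pt \<Rightarrow> nat) \<Rightarrow> pt \<Rightarrow> pt \<Rightarrow> pt list \<Rightarrow> bool" where
  "geodesic \<omega> x y \<gamma> \<longleftrightarrow> dpath \<gamma> x y \<and>
     (\<forall>\<gamma>'. dpath \<gamma>' x y \<longrightarrow> pweight \<omega> \<gamma>' \<le> pweight \<omega> \<gamma>)"

definition lgeodesic :: "(pt \<Rightarrow> nat) \<Rightarrow> (pt \<Rightarrow> int) \<Rightarrow> (pt \<Rightarrow> int) \<Rightarrow> pt \<Rightarrow> pt \<Rightarrow> pt list \<Rightarrow> bool" where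
  "lgeodesic \<omega> \<omega>H \<omega>V x y \<gamma> \<longleftrightarrow> dpath \<gamma> x y \<and>
     (\<forall>\<gamma>'. dpath \<gamma>' x y \<longrightarrow> lweight \<omega> \<omega>H \<omega>V x y \<gamma>' \<le> lweight \<omega> \<omega>H \<omega>V x y \<gamma>)"

definition above :: "pt list \<Rightarrow> pt list \<Rightarrow> bool" where
  "above \<gamma> \<gamma>' \<longleftrightarrow> (\<forall>a. (\<exists>z\<in>set \<gamma>. fst z = a) \<and> (\<exists>z\<in>set \<gamma>'. fst z = a) \<longrightarrow>
      Min {snd z | z. z \<in> set \<gamma>' \<and> fst z = a} \<le> Min {snd z | z. z \<in> set \<gamma> \<and> fst z = a})"

definition pi_plus :: "(pt \<Rightarrow> nat) \<Rightarrow> pt \<Rightarrow> pt \<Rightarrow> pt list" where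
  "pi_plus \<omega> u v = (THE \<gamma>. geodesic \<omega> u v \<gamma> \<and> (\<forall>\<gamma>'. geodesic \<omega> u v \<gamma>' \<longrightarrow> above \<gamma> \<gamma>'))"

definition pi_minus :: "(pt \<Rightarrow> nat) \<Rightarrow> pt \<Rightarrow> pt \<Rightarrow> pt list" where
  "pi_minus \<omega> u v = (THE \<gamma>. geodesic \<omega> u v \<gamma> \<and> (\<forall>\<gamma>'. geodesic \<omega> u v \<gamma>' \<longrightarrow> above \<gamma>' \<gamma>))"

definition lpi_plus :: "(pt \<Rightarrow> nat) \<Rightarrow> (pt \<Rightarrow> int) \<Rightarrow> (pt \<Rightarrow> int) \<Rightarrow> pt \<Rightarrow> pt \<Rightarrow> pt list" where
  "lpi_plus \<omega> \<omega>H \<omega>V u v = (THE \<gamma>. lgeodesic \<omega> \<omega>H \<omega>V u v \<gamma> \<and>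
      (\<forall>\<gamma>'. lgeodesic \<omega> \<omega>H \<omega>V u v \<gamma>' \<longrightarrow> above \<gamma> \<gamma>'))"

definition lpi_minus :: "(pt \<Rightarrow> nat) \<Rightarrow> (pt \<Rightarrow> int) \<Rightarrow> (pt \<Rightarrow> int) \<Rightarrow> pt \<Rightarrow> pt \<Rightarrow> pt list" where
  "lpi_minus \<omega> \<omega>H \<omega>V u v = (THE \<gamma>. lgeodesic \<omega> \<omega>H \<omega>V u v \<gamma> \<and>
      (\<forall>\<gamma>'. lgeodesic \<omega> \<omega>H \<omega>V u v \<gamma>' \<longrightarrow> above \<gamma>' \<gamma>))"

text \<open>Boundary construction based at b: c j is the column weight at b + j e2 (j in Z);
  L(b) = 0 and L(b + j e2) - L(b + (j-1) e2) = c j.\<close>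
definition Lcol :: "(int \<Rightarrow> nat) \<Rightarrow> int \<Rightarrow> int" where
  "Lcol c j = (if 0 \<le> j then (\<Sum>i\<in>{1..j}. int (c i)) else - (\<Sum>i\<in>{j+1..0}. int (c i)))"

definition Lset :: "(pt \<Rightarrow> nat) \<Rightarrow> (int \<Rightarrow> nat) \<Rightarrow> pt \<Rightarrow> pt \<Rightarrow> int set" where
  "Lset \<omega> c b x = {Lcol c j + LPP \<omega> (fst b + 1, snd b + j) x | j. j \<le> snd x - snd b}"

definition Lfun :: "(pt \<Rightarrow> nat) \<Rightarrow> (int \<Rightarrow> nat) \<Rightarrow> pt \<Rightarrow> pt \<Rightarrow> int" where
  "Lfun \<omega> c b x = (if fst x = fst b then Lcol c (snd x - snd b) else Sup (Lset \<omega> c b x))"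

definition omH :: "(pt \<Rightarrow> nat) \<Rightarrow> (int \<Rightarrow> nat) \<Rightarrow> pt \<Rightarrow> pt \<Rightarrow> int" where
  "omH \<omega> c b x = Lfun \<omega> c b x - Lfun \<omega> c b (fst x - 1, snd x)"

definition omV :: "(pt \<Rightarrow> nat) \<Rightarrow> (int \<Rightarrow> nat) \<Rightarrow> pt \<Rightarrow> pt \<Rightarrow> int" where
  "omV \<omega> c b x = Lfun \<omega> c b x - Lfun \<omega> c b (fst x, snd x - 1)"

end

theory Submission
  imports Defs
begin

(* Directed paths from x to y are indexed by antidiagonals, so two of them can be compared
   vertex by vertex; the pointwise lower and upper envelopes are again directed paths and their
   total weight equals that of the two original paths. Hence, for any vertex weight, the
   geodesics are closed under both envelopes, which yields a unique downmost and a unique upmost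
   geodesic.

   For the comparison let e be the downmost lambda-geodesic and g any bulk geodesic from u.
   Wherever e runs strictly above g, e has already left u through u + e1, so it is off both axes
   through u and carries bulk weights; the vertex of g there carries a lambda-weight at least its
   bulk weight, since omega^H, omega^V >= omega by superadditivity of L. Exchanging the two
   pieces therefore turns the lower envelope of g and e into a lambda-geodesic, and downmostness
   of e forces g to lie above e. The upmost case is the mirror image. *)

section \<open>Directed paths\<close>

definition antidiag :: "pt \<Rightarrow> int" where
  "antidiag z = fst z + snd z"

lemma dpath_step:
  assumes "dpath \<gamma> x y" "Suc i < length \<gamma>"
  shows "(fst (\<gamma>!Suc i) = fst (\<gamma>!i) \<and> snd (\<gamma>!Suc i) = snd (\<gamma>!i) + 1) \<or>
         (fst (\<gamma>!Suc i) = fst (\<gamma>!i) + 1 \<and> snd (\<gamma>!Suc i) = snd (\<gamma>!i))"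
  using assms unfolding dpath_def padd_def e1_def e2_def by auto

lemma dpath_nth_0: "dpath \<gamma> x y \<Longrightarrow> \<gamma>!0 = x"
  unfolding dpath_def by (auto simp: hd_conv_nth)

lemma dpath_nth_last: "dpath \<gamma> x y \<Longrightarrow> \<gamma>!(length \<gamma> - 1) = y"
  unfolding dpath_def by (auto simp: last_conv_nth)

lemma dpath_length_pos: "dpath \<gamma> x y \<Longrightarrow> 0 < length \<gamma>"
  unfolding dpath_def by auto

lemma dpath_antidiag_nth:
  assumes "dpath \<gamma> x y" "i < length \<gamma>"
  shows "antidiag (\<gamma>!i) = antidiag x + int i"
  using assms(2)
proof (induction i)
  case 0
  then show ?case using dpath_nth_0[OF assms(1)] by simp
next
  case (Suc i)
  then show ?case using dpath_step[OF assms(1) Suc.prems] by (auto simp: antidiag_def)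
qed

lemma dpath_nth_mono:
  assumes "dpath \<gamma> x y" "i \<le> j" "j < length \<gamma>"
  shows "fst (\<gamma>!i) \<le> fst (\<gamma>!j) \<and> snd (\<gamma>!i) \<le> snd (\<gamma>!j)"
  using assms(2,3)
proof (induction j)
  case (Suc j)
  show ?case
  proof (cases "i = Suc j")
    case False
    then show ?thesis using Suc dpath_step[OF assms(1) Suc.prems(2)] by fastforce
  qed simp
qed simp

lemma dpath_in_box:
  assumes "dpath \<gamma> x y" "z \<in> set \<gamma>"
  shows "fst x \<le> fst z \<and> fst z \<le> fst y \<and> snd x \<le> snd z \<and> snd z \<le> snd y"
proof -
  obtain i where i: "i < length \<gamma>" "\<gamma>!i = z"
    using assms(2) by (auto simp: in_set_conv_nth)
  show ?thesis
    using dpath_nth_mono[OF assms(1), of 0 i] dpath_nth_mono[OF assms(1), of i "length \<gamma> - 1"] i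
      dpath_nth_0[OF assms(1)] dpath_nth_last[OF assms(1)] by simp
qed

lemma dpath_length:
  assumes "dpath \<gamma> x y"
  shows "int (length \<gamma>) = antidiag y - antidiag x + 1"
proof -
  have "antidiag y = antidiag x + int (length \<gamma> - 1)"
    unfolding dpath_nth_last[OF assms, symmetric]
    using dpath_length_pos[OF assms] by (intro dpath_antidiag_nth[OF assms]) simp
  moreover have "int (length \<gamma> - 1) = int (length \<gamma>) - 1"
    using dpath_length_pos[OF assms] by (simp add: of_nat_diff Suc_le_eq)
  ultimately show ?thesis by linarith
qed

lemma dpath_same_length:
  assumes "dpath A x y" "dpath B x y"
  shows "length A = length B"
proof -
  have "int (length A) = int (length B)"
    using dpath_length[OF assms(1)] dpath_length[OF assms(2)] by presburger
  then show ?thesis by simp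
qed

lemma dpath_distinct:
  assumes "dpath \<gamma> x y" shows "distinct \<gamma>"
proof -
  have "i = j" if "i < length \<gamma>" "j < length \<gamma>" "\<gamma>!i = \<gamma>!j" for i j
  proof -
    have "antidiag (\<gamma>!i) = antidiag (\<gamma>!j)" using that(3) by simp
    then show ?thesis using dpath_antidiag_nth[OF assms that(1)] dpath_antidiag_nth[OF assms that(2)] by simp
  qed
  then show ?thesis by (auto simp: distinct_conv_nth)
qed

lemma dpath_reaches_column:
  assumes "dpath \<gamma> x y" "i < length \<gamma>" "fst x \<le> a" "a \<le> fst (\<gamma>!i)"
  shows "\<exists>j\<le>i. fst (\<gamma>!j) = a"
  using assms(2,4)
proof (induction i)
  case 0
  then show ?case using assms(3) dpath_nth_0[OF assms(1)] by auto
next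
  case (Suc i)
  show ?case
  proof (cases "a \<le> fst (\<gamma>!i)")
    case True
    then show ?thesis using Suc by (meson Suc_lessD le_SucI)
  next
    case False
    then show ?thesis using dpath_step[OF assms(1) Suc.prems(1)] Suc.prems by force
  qed
qed

lemma dpath_eqI:
  assumes "dpath A x y" "dpath B x y" "map fst A = map fst B"
  shows "A = B"
proof (rule nth_equalityI)
  show l: "length A = length B" using dpath_same_length[OF assms(1,2)] .
  fix i assume i: "i < length A"
  have "fst (A!i) = fst (B!i)" using i l nth_map[of i A fst] nth_map[of i B fst] assms(3) by simp
  moreover have "antidiag (A!i) = antidiag (B!i)"
    using dpath_antidiag_nth[OF assms(1) i] dpath_antidiag_nth[OF assms(2)] i l by simp
  ultimately show "A!i = B!i" by (simp add: antidiag_def prod_eq_iff)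
qed

lemma dpath_snoc:
  assumes "dpath \<gamma> x y" "z = padd y e1 \<or> z = padd y e2"
  shows "dpath (\<gamma> @ [z]) x z"
  unfolding dpath_def
proof (intro conjI allI impI)
  fix i assume i: "Suc i < length (\<gamma> @ [z])"
  show "(\<gamma> @ [z]) ! Suc i = padd ((\<gamma> @ [z]) ! i) e1 \<or> (\<gamma> @ [z]) ! Suc i = padd ((\<gamma> @ [z]) ! i) e2"
  proof (cases "Suc i < length \<gamma>")
    case True
    then show ?thesis using assms(1) unfolding dpath_def by (auto simp: nth_append)
  next
    case False
    then have "Suc i = length \<gamma>" using i by simp
    moreover have "\<gamma>!i = y" using calculation dpath_nth_last[OF assms(1)] by (simp flip: calculation)
    ultimately show ?thesis using assms(2) by (auto simp: nth_append)
  qed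
qed (use assms(1) in \<open>auto simp: dpath_def\<close>)

lemma dpath_exists:
  assumes "cle x y" shows "\<exists>\<gamma>. dpath \<gamma> x y"
  using assms
proof (induction "nat (antidiag y - antidiag x)" arbitrary: y)
  case 0
  then have "y = x" by (auto simp: cle_def antidiag_def prod_eq_iff)
  then show ?case by (auto simp: dpath_def)
next
  case (Suc n)
  obtain y' where y': "cle x y'" "n = nat (antidiag y' - antidiag x)" "y = padd y' e1 \<or> y = padd y' e2"
  proof (cases "fst x < fst y")
    case True
    then show ?thesis
      using Suc.hyps(2) Suc.prems by (intro that[of "(fst y - 1, snd y)"]) (auto simp: cle_def antidiag_def padd_def e1_def)
  next
    case False
    then show ?thesis
      using Suc.hyps(2) Suc.prems by (intro that[of "(fst y, snd y - 1)"]) (auto simp: cle_def antidiag_def padd_def e2_def)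
  qed
  then show ?case using Suc.hyps(1) dpath_snoc by blast
qed

lemma finite_dpaths: "finite {\<gamma>. dpath \<gamma> x y}"
proof (rule finite_subset)
  let ?B = "{fst x..fst y} \<times> {snd x..snd y}"
  show "{\<gamma>. dpath \<gamma> x y} \<subseteq> {\<gamma>. set \<gamma> \<subseteq> ?B \<and> length \<gamma> = nat (antidiag y - antidiag x + 1)}"
    using dpath_in_box dpath_length by (fastforce simp: mem_Times_iff)
  show "finite {\<gamma>. set \<gamma> \<subseteq> ?B \<and> length \<gamma> = nat (antidiag y - antidiag x + 1)}"
    by (rule finite_lists_length_eq) simp
qed

section \<open>The relation \<open>above\<close>\<close>

definition column :: "pt list \<Rightarrow> int \<Rightarrow> int set" where
  "column \<gamma> a = {snd z | z. z \<in> set \<gamma> \<and> fst z = a}"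

lemma finite_column: "finite (column \<gamma> a)"
  unfolding column_def setcompr_eq_image by simp

lemma column_Min_le: "z \<in> set \<gamma> \<Longrightarrow> fst z = a \<Longrightarrow> Min (column \<gamma> a) \<le> snd z"
  by (intro Min_le finite_column) (force simp: column_def)

lemma column_Min_attained:
  assumes "z \<in> set \<gamma>" "fst z = a"
  obtains z' where "z' \<in> set \<gamma>" "fst z' = a" "snd z' = Min (column \<gamma> a)"
proof -
  have "column \<gamma> a \<noteq> {}" unfolding column_def using assms by blast
  then have "Min (column \<gamma> a) \<in> column \<gamma> a" using finite_column Min_in by blast
  then show ?thesis using that by (auto simp: column_def)
qed

lemma above_column_Min:
  "above A B \<longleftrightarrow> (\<forall>a. (\<exists>z\<in>set A. fst z = a) \<and> (\<exists>z\<in>set B. fst z = a) \<longrightarrow>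
     Min (column B a) \<le> Min (column A a))"
  unfolding above_def column_def by simp

lemma fst_le_if_above:
  assumes A: "dpath A x y" and B: "dpath B x y" and AB: "above A B" and k: "k < length A"
  shows "fst (A!k) \<le> fst (B!k)"
proof (rule ccontr)
  assume gt: "\<not> ?thesis"
  define a where "a = fst (A!k)"
  have l: "length A = length B" using dpath_same_length[OF A B] .
  have Ak: "A!k \<in> set A" using k by simp
  obtain j where j: "j \<le> length B - 1" "fst (B!j) = a"
    using dpath_reaches_column[OF B, of "length B - 1" a] dpath_in_box[OF A Ak]
      dpath_nth_last[OF B] dpath_length_pos[OF B] a_def by auto
  then have "j < length B" using dpath_length_pos[OF B] by linarith
  then have "B!j \<in> set B" by simp
  then obtain z where z: "z \<in> set B" "fst z = a" "snd z = Min (column B a)"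
    using j(2) column_Min_attained by metis
  have "Min (column B a) \<le> Min (column A a)"
    using AB Ak z unfolding above_column_Min a_def by blast
  also have "\<dots> \<le> snd (A!k)" using column_Min_le[OF Ak] a_def by simp
  finally have z_le: "snd z \<le> snd (A!k)" using z(3) by simp
  obtain t where t: "t < length B" "B!t = z" using z(1) by (auto simp: in_set_conv_nth)
  \<comment> \<open>\<open>B\<close> enters column \<open>a\<close> only after step \<open>k\<close>, hence on a higher antidiagonal than \<open>A!k\<close>\<close>
  have "k < t"
    using dpath_nth_mono[OF B, of t k] gt k l t z(2) a_def by force
  then show False
    using dpath_antidiag_nth[OF B t(1)] dpath_antidiag_nth[OF A k] z_le t(2) z(2) a_def
    by (simp add: antidiag_def)
qed

lemma above_if_fst_le:
  assumes A: "dpath A x y" and B: "dpath B x y"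
    and le: "\<And>i. i < length A \<Longrightarrow> fst (A!i) \<le> fst (B!i)"
  shows "above A B"
  unfolding above_column_Min
proof (intro allI impI)
  fix a assume "(\<exists>z\<in>set A. fst z = a) \<and> (\<exists>z\<in>set B. fst z = a)"
  then obtain zA zB where zA: "zA \<in> set A" "fst zA = a" and zB: "zB \<in> set B" "fst zB = a"
    by blast
  obtain z where z: "z \<in> set A" "fst z = a" "snd z = Min (column A a)"
    using column_Min_attained[OF zA] by metis
  obtain i where i: "i < length A" "A!i = z" using z(1) by (auto simp: in_set_conv_nth)
  have iB: "i < length B" using i dpath_same_length[OF A B] by simp
  obtain j where j: "j \<le> i" "fst (B!j) = a"
    using dpath_reaches_column[OF B iB, of a] dpath_in_box[OF B zB(1)] zB(2) le[OF i(1)] i(2) z(2)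
    by auto
  have "Min (column B a) \<le> snd (B!j)" using j iB by (intro column_Min_le) auto
  also have "\<dots> \<le> snd (A!i)"
    using dpath_antidiag_nth[OF B, of j] dpath_antidiag_nth[OF A i(1)] j iB i z(2)
    by (simp add: antidiag_def)
  finally show "Min (column B a) \<le> Min (column A a)" using i z by simp
qed

lemma above_iff_fst_le:
  assumes "dpath A x y" "dpath B x y"
  shows "above A B \<longleftrightarrow> list_all2 (\<lambda>a b. fst a \<le> fst b) A B"
  using fst_le_if_above[OF assms] above_if_fst_le[OF assms] dpath_same_length[OF assms]
  by (auto simp: list_all2_conv_all_nth)

lemma above_trans:
  assumes "dpath A x y" "dpath B x y" "dpath C x y" "above A B" "above B C"
  shows "above A C"
proof -
  have "list_all2 (\<lambda>a b. fst a \<le> fst b) A B" "list_all2 (\<lambda>a b. fst a \<le> fst b) B C"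
    using assms above_iff_fst_le by blast+
  then have "list_all2 (\<lambda>a b. fst a \<le> fst b) A C"
    by (rule list_all2_trans[rotated]) (rule order_trans)
  then show ?thesis using assms(1,3) above_iff_fst_le by blast
qed

lemma above_antisym:
  assumes "dpath A x y" "dpath B x y" "above A B" "above B A"
  shows "A = B"
proof (rule dpath_eqI[OF assms(1,2)])
  have "list_all2 (\<lambda>a b. fst a \<le> fst b) A B" "list_all2 (\<lambda>a b. fst a \<le> fst b) B A"
    using assms above_iff_fst_le by blast+
  then show "map fst A = map fst B"
    by (auto simp: list_all2_conv_all_nth intro!: nth_equalityI order.antisym)
qed

section \<open>Envelopes and extreme geodesics\<close>

text \<open>Applied to two points on a common antidiagonal, \<open>lower\<close> picks the one further right, i.e.
  further down; so \<open>map2 lower\<close> and \<open>map2 upper\<close> are the lower and upper envelopes of two paths.\<close>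
definition lower :: "pt \<Rightarrow> pt \<Rightarrow> pt" where
  "lower a b = (if fst b < fst a then a else b)"

definition upper :: "pt \<Rightarrow> pt \<Rightarrow> pt" where
  "upper a b = (if fst b < fst a then b else a)"

lemma dpath_map2:
  assumes A: "dpath A x y" and B: "dpath B x y"
    and sel: "\<And>a b. f a b = a \<or> f a b = b"
    and fst_step: "\<And>i. Suc i < length A \<Longrightarrow>
      fst (f (A!Suc i) (B!Suc i)) - fst (f (A!i) (B!i)) \<in> {0, 1}"
  shows "dpath (map2 f A B) x y"
proof -
  let ?M = "map2 f A B"
  have l: "length A = length B" using dpath_same_length[OF A B] .
  have nth: "?M!i = f (A!i) (B!i)" if "i < length A" for i using that l by simp
  have diag: "antidiag (?M!i) = antidiag x + int i" if "i < length A" for i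
    using sel[of "A!i" "B!i"] nth[OF that] dpath_antidiag_nth[OF A that]
      dpath_antidiag_nth[OF B] that l by auto
  have ne: "?M \<noteq> []" using dpath_length_pos[OF A] l by auto
  have "hd ?M = x"
    using ne nth[of 0] sel[of x x] dpath_nth_0[OF A] dpath_nth_0[OF B] dpath_length_pos[OF A]
    by (simp add: hd_conv_nth)
  moreover have "last ?M = y"
    using ne nth[of "length A - 1"] sel[of y y] dpath_nth_last[OF A] dpath_nth_last[OF B]
      dpath_length_pos[OF A] l by (simp add: last_conv_nth)
  moreover have "?M!Suc i = padd (?M!i) e1 \<or> ?M!Suc i = padd (?M!i) e2"
    if "Suc i < length ?M" for i
    using fst_step[of i] diag[of i] diag[of "Suc i"] nth[of i] nth[of "Suc i"] that l
    by (auto simp: padd_def e1_def e2_def antidiag_def prod_eq_iff)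
  ultimately show ?thesis unfolding dpath_def using ne by blast
qed

lemma dpath_map2_lower:
  assumes A: "dpath A x y" and B: "dpath B x y"
  shows "dpath (map2 lower A B) x y"
proof (rule dpath_map2[OF A B])
  show "lower a b = a \<or> lower a b = b" for a b by (simp add: lower_def)
  fix i assume "Suc i < length A"
  then show "fst (lower (A!Suc i) (B!Suc i)) - fst (lower (A!i) (B!i)) \<in> {0, 1}"
    using dpath_step[OF A, of i] dpath_step[OF B, of i] dpath_same_length[OF A B]
    by (auto simp: lower_def)
qed

lemma dpath_map2_upper:
  assumes A: "dpath A x y" and B: "dpath B x y"
  shows "dpath (map2 upper A B) x y"
proof (rule dpath_map2[OF A B])
  show "upper a b = a \<or> upper a b = b" for a b by (simp add: upper_def)
  fix i assume "Suc i < length A"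
  then show "fst (upper (A!Suc i) (B!Suc i)) - fst (upper (A!i) (B!i)) \<in> {0, 1}"
    using dpath_step[OF A, of i] dpath_step[OF B, of i] dpath_same_length[OF A B]
    by (auto simp: upper_def)
qed

lemma above_map2_lower:
  assumes "dpath A x y" "dpath B x y"
  shows "above A (map2 lower A B)" "above B (map2 lower A B)"
  using assms dpath_map2_lower[OF assms] dpath_same_length[OF assms]
  by (auto simp: above_iff_fst_le list_all2_conv_all_nth lower_def)

lemma above_map2_upper:
  assumes "dpath A x y" "dpath B x y"
  shows "above (map2 upper A B) A" "above (map2 upper A B) B"
  using assms dpath_map2_upper[OF assms] dpath_same_length[OF assms]
  by (auto simp: above_iff_fst_le list_all2_conv_all_nth upper_def)

lemma sum_list_map2_lower_upper:
  fixes w :: "pt \<Rightarrow> 'a::comm_monoid_add"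
  shows "length A = length B \<Longrightarrow>
    sum_list (map w (map2 lower A B)) + sum_list (map w (map2 upper A B))
      = sum_list (map w A) + sum_list (map w B)"
  by (induction A B rule: list_induct2) (auto simp: lower_def upper_def ac_simps)

lemma list_all2_le_sum_list_eq:
  fixes xs ys :: "int list"
  assumes "list_all2 (\<le>) xs ys" "sum_list ys \<le> sum_list xs"
  shows "xs = ys"
proof -
  have "sum_list xs \<le> sum_list ys \<and> (sum_list ys \<le> sum_list xs \<longrightarrow> xs = ys)"
    using assms(1) by (induction rule: list_all2_induct) auto
  then show ?thesis using assms(2) by blast
qed

lemma above_eq_if_sum_fst_le:
  assumes "dpath A x y" "dpath B x y" "above A B"
    and "sum_list (map fst B) \<le> sum_list (map fst A)"
  shows "A = B"
proof (rule dpath_eqI[OF assms(1,2)])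
  have "list_all2 (\<le>) (map fst A) (map fst B)"
    using assms(1-3) above_iff_fst_le by (simp add: list_all2_map1 list_all2_map2)
  then show "map fst A = map fst B" using assms(4) by (rule list_all2_le_sum_list_eq)
qed

definition wgeodesic :: "(pt \<Rightarrow> int) \<Rightarrow> pt \<Rightarrow> pt \<Rightarrow> pt list \<Rightarrow> bool" where
  "wgeodesic w x y \<gamma> \<longleftrightarrow> dpath \<gamma> x y \<and>
     (\<forall>\<gamma>'. dpath \<gamma>' x y \<longrightarrow> sum_list (map w \<gamma>') \<le> sum_list (map w \<gamma>))"

lemma wgeodesic_dpath: "wgeodesic w x y \<gamma> \<Longrightarrow> dpath \<gamma> x y"
  by (simp add: wgeodesic_def)

definition downmost_wgeodesic :: "(pt \<Rightarrow> int) \<Rightarrow> pt \<Rightarrow> pt \<Rightarrow> pt list \<Rightarrow> bool" where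
  "downmost_wgeodesic w x y \<gamma> \<longleftrightarrow> wgeodesic w x y \<gamma> \<and> (\<forall>\<gamma>'. wgeodesic w x y \<gamma>' \<longrightarrow> above \<gamma>' \<gamma>)"

definition upmost_wgeodesic :: "(pt \<Rightarrow> int) \<Rightarrow> pt \<Rightarrow> pt \<Rightarrow> pt list \<Rightarrow> bool" where
  "upmost_wgeodesic w x y \<gamma> \<longleftrightarrow> wgeodesic w x y \<gamma> \<and> (\<forall>\<gamma>'. wgeodesic w x y \<gamma>' \<longrightarrow> above \<gamma> \<gamma>')"

lemma wgeodesic_exists:
  assumes "cle x y" shows "\<exists>\<gamma>. wgeodesic w x y \<gamma>"
proof -
  have "{\<gamma>. dpath \<gamma> x y} \<noteq> {}" using dpath_exists[OF assms] by blast
  then obtain g where "is_arg_min (\<lambda>\<gamma>. - sum_list (map w \<gamma>)) (\<lambda>\<gamma>. \<gamma> \<in> {\<gamma>. dpath \<gamma> x y}) g"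
    using ex_is_arg_min_if_finite[OF finite_dpaths] by blast
  then have "wgeodesic w x y g" by (auto simp: is_arg_min_linorder wgeodesic_def)
  then show ?thesis ..
qed

lemma finite_wgeodesics: "finite {\<gamma>. wgeodesic w x y \<gamma>}"
  by (rule finite_subset[OF _ finite_dpaths[of x y]]) (auto simp: wgeodesic_dpath)

lemma wgeodesic_map2_lower_upper:
  assumes A: "wgeodesic w x y A" and B: "wgeodesic w x y B"
  shows "wgeodesic w x y (map2 lower A B)" "wgeodesic w x y (map2 upper A B)"
proof -
  let ?S = "\<lambda>\<gamma>. sum_list (map w \<gamma>)"
  have dA: "dpath A x y" and dB: "dpath B x y" using A B by (simp_all add: wgeodesic_dpath)
  have m: "dpath (map2 lower A B) x y" and M: "dpath (map2 upper A B) x y"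
    using dpath_map2_lower[OF dA dB] dpath_map2_upper[OF dA dB] .
  have "?S (map2 lower A B) + ?S (map2 upper A B) = ?S A + ?S B"
    using sum_list_map2_lower_upper dpath_same_length[OF dA dB] by blast
  moreover have "?S (map2 lower A B) \<le> ?S A" "?S (map2 upper A B) \<le> ?S A" "?S B = ?S A"
    using A B m M dA dB unfolding wgeodesic_def by (auto intro: order.antisym)
  ultimately show "wgeodesic w x y (map2 lower A B)" "wgeodesic w x y (map2 upper A B)"
    using A m M unfolding wgeodesic_def by (auto intro: order_trans)
qed

lemma ex1_downmost_wgeodesic:
  assumes "cle x y" shows "\<exists>!\<gamma>. downmost_wgeodesic w x y \<gamma>"
proof -
  have "{\<gamma>. wgeodesic w x y \<gamma>} \<noteq> {}" using wgeodesic_exists[OF assms] by blast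
  then obtain g where
    "is_arg_min (\<lambda>\<gamma>. - sum_list (map fst \<gamma>)) (\<lambda>\<gamma>. \<gamma> \<in> {\<gamma>. wgeodesic w x y \<gamma>}) g"
    using ex_is_arg_min_if_finite[OF finite_wgeodesics] by blast
  then have g: "wgeodesic w x y g"
    and g_max: "\<And>\<gamma>. wgeodesic w x y \<gamma> \<Longrightarrow> sum_list (map fst \<gamma>) \<le> sum_list (map fst g)"
    by (auto simp: is_arg_min_linorder)
  have dg: "dpath g x y" using g by (rule wgeodesic_dpath)
  \<comment> \<open>the lower envelope of \<open>g\<close> with a geodesic is a geodesic at least as far right, hence \<open>g\<close> itself\<close>
  have "above \<gamma> g" if \<gamma>: "wgeodesic w x y \<gamma>" for \<gamma>
  proof -
    have d\<gamma>: "dpath \<gamma> x y" using \<gamma> by (rule wgeodesic_dpath)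
    let ?m = "map2 lower g \<gamma>"
    have "g = ?m"
      using above_eq_if_sum_fst_le[OF dg dpath_map2_lower[OF dg d\<gamma>] above_map2_lower(1)[OF dg d\<gamma>]]
        g_max[OF wgeodesic_map2_lower_upper(1)[OF g \<gamma>]] .
    then show ?thesis using above_map2_lower(2)[OF dg d\<gamma>] by simp
  qed
  then have "downmost_wgeodesic w x y g" using g by (simp add: downmost_wgeodesic_def)
  moreover have "h = g" if "downmost_wgeodesic w x y h" for h
    using that \<open>downmost_wgeodesic w x y g\<close> above_antisym
    unfolding downmost_wgeodesic_def wgeodesic_def by blast
  ultimately show ?thesis by blast
qed

lemma ex1_upmost_wgeodesic:
  assumes "cle x y" shows "\<exists>!\<gamma>. upmost_wgeodesic w x y \<gamma>"
proof -
  have "{\<gamma>. wgeodesic w x y \<gamma>} \<noteq> {}" using wgeodesic_exists[OF assms] by blast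
  then obtain g where
    "is_arg_min (\<lambda>\<gamma>. sum_list (map fst \<gamma>)) (\<lambda>\<gamma>. \<gamma> \<in> {\<gamma>. wgeodesic w x y \<gamma>}) g"
    using ex_is_arg_min_if_finite[OF finite_wgeodesics] by blast
  then have g: "wgeodesic w x y g"
    and g_min: "\<And>\<gamma>. wgeodesic w x y \<gamma> \<Longrightarrow> sum_list (map fst g) \<le> sum_list (map fst \<gamma>)"
    by (auto simp: is_arg_min_linorder)
  have dg: "dpath g x y" using g by (rule wgeodesic_dpath)
  have "above g \<gamma>" if \<gamma>: "wgeodesic w x y \<gamma>" for \<gamma>
  proof -
    have d\<gamma>: "dpath \<gamma> x y" using \<gamma> by (rule wgeodesic_dpath)
    let ?M = "map2 upper g \<gamma>"
    have "?M = g"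
      using above_eq_if_sum_fst_le[OF dpath_map2_upper[OF dg d\<gamma>] dg above_map2_upper(1)[OF dg d\<gamma>]]
        g_min[OF wgeodesic_map2_lower_upper(2)[OF g \<gamma>]] .
    then show ?thesis using above_map2_upper(2)[OF dg d\<gamma>] by simp
  qed
  then have "upmost_wgeodesic w x y g" using g by (simp add: upmost_wgeodesic_def)
  moreover have "h = g" if "upmost_wgeodesic w x y h" for h
    using that \<open>upmost_wgeodesic w x y g\<close> above_antisym
    unfolding upmost_wgeodesic_def wgeodesic_def by blast
  ultimately show ?thesis by blast
qed

lemma sum_list_exchange:
  fixes f w :: "pt \<Rightarrow> int"
  assumes "length A = length B"
    and "\<And>a b. (a, b) \<in> set (zip A B) \<Longrightarrow> fst b < fst a \<Longrightarrow> w a + f b \<le> f a + w b"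
  shows "sum_list (map f B) + sum_list (map w A)
    \<le> sum_list (map f (map2 lower A B)) + sum_list (map w (map2 upper A B))"
  using assms by (induction A B rule: list_induct2) (fastforce simp: lower_def upper_def)+

lemma wgeodesic_above_downmost:
  assumes g: "wgeodesic w x y g" and e: "downmost_wgeodesic f x y e"
    and exchange: "\<And>i. i < length g \<Longrightarrow> fst (e!i) < fst (g!i) \<Longrightarrow>
      w (g!i) + f (e!i) \<le> f (g!i) + w (e!i)"
  shows "above g e"
proof -
  have dg: "dpath g x y" and de: "dpath e x y"
    using g e by (auto simp: downmost_wgeodesic_def wgeodesic_def)
  let ?m = "map2 lower g e"
  have "w a + f b \<le> f a + w b" if "(a, b) \<in> set (zip g e)" "fst b < fst a" for a b
  proof -
    have "\<exists>i. i < length g \<and> g!i = a \<and> e!i = b" using that(1) by (auto simp: in_set_zip)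
    then obtain i where "i < length g" "g!i = a" "e!i = b" by blast
    then show ?thesis using exchange[of i] that(2) by simp
  qed
  then have "sum_list (map f e) + sum_list (map w g)
      \<le> sum_list (map f ?m) + sum_list (map w (map2 upper g e))"
    using dpath_same_length[OF dg de] by (intro sum_list_exchange)
  moreover have "sum_list (map w (map2 upper g e)) \<le> sum_list (map w g)"
    using g dpath_map2_upper[OF dg de] unfolding wgeodesic_def by blast
  ultimately have "wgeodesic f x y ?m"
    using e dpath_map2_lower[OF dg de] unfolding downmost_wgeodesic_def wgeodesic_def by force
  then have "above ?m e" using e by (simp add: downmost_wgeodesic_def)
  then show ?thesis
    by (rule above_trans[OF dg dpath_map2_lower[OF dg de] de above_map2_lower(1)[OF dg de]])
qed

lemma upmost_above_wgeodesic:
  assumes g: "wgeodesic w x y g" and e: "upmost_wgeodesic f x y e"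
    and exchange: "\<And>i. i < length g \<Longrightarrow> fst (g!i) < fst (e!i) \<Longrightarrow>
      w (g!i) + f (e!i) \<le> f (g!i) + w (e!i)"
  shows "above e g"
proof -
  have dg: "dpath g x y" and de: "dpath e x y"
    using g e by (auto simp: upmost_wgeodesic_def wgeodesic_def)
  let ?M = "map2 upper e g"
  \<comment> \<open>\<open>sum_list_exchange\<close> with the roles of \<open>f\<close> and \<open>w\<close> interchanged\<close>
  have "f a + w b \<le> w a + f b" if "(a, b) \<in> set (zip e g)" "fst b < fst a" for a b
  proof -
    have "\<exists>i. i < length g \<and> e!i = a \<and> g!i = b" using that(1) by (auto simp: in_set_zip)
    then obtain i where "i < length g" "e!i = a" "g!i = b" by blast
    then show ?thesis using exchange[of i] that(2) by (simp add: add.commute)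
  qed
  then have "sum_list (map w g) + sum_list (map f e)
      \<le> sum_list (map w (map2 lower e g)) + sum_list (map f ?M)"
    using dpath_same_length[OF de dg] by (intro sum_list_exchange)
  moreover have "sum_list (map w (map2 lower e g)) \<le> sum_list (map w g)"
    using g dpath_map2_lower[OF de dg] unfolding wgeodesic_def by blast
  ultimately have "wgeodesic f x y ?M"
    using e dpath_map2_upper[OF de dg] unfolding upmost_wgeodesic_def wgeodesic_def by force
  then have "above e ?M" using e by (simp add: upmost_wgeodesic_def)
  then show ?thesis
    by (rule above_trans[OF de dpath_map2_upper[OF de dg] dg _ above_map2_upper(2)[OF de dg]])
qed

section \<open>Bulk and \<open>\<lambda>\<close>-geodesics\<close>

lemma pweight_eq_sum_list:
  "dpath \<gamma> x y \<Longrightarrow> pweight \<omega> \<gamma> = sum_list (map (\<lambda>z. int (\<omega> z)) \<gamma>)"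
  by (simp add: pweight_def sum_list_distinct_conv_sum_set dpath_distinct)

lemma geodesic_eq_wgeodesic: "geodesic \<omega> x y = wgeodesic (\<lambda>z. int (\<omega> z)) x y"
  by (rule ext) (auto simp: geodesic_def wgeodesic_def pweight_eq_sum_list)

definition lsite_weight :: "(pt \<Rightarrow> nat) \<Rightarrow> (pt \<Rightarrow> int) \<Rightarrow> (pt \<Rightarrow> int) \<Rightarrow> pt \<Rightarrow> pt \<Rightarrow> int" where
  "lsite_weight \<omega> \<omega>H \<omega>V x z =
     (if z = x then 0 else if snd z = snd x then \<omega>H z
      else if fst z = fst x then \<omega>V z else int (\<omega> z))"

lemma lweight_eq_sum_list:
  assumes "dpath \<gamma> x y"
  shows "lweight \<omega> \<omega>H \<omega>V x y \<gamma> = sum_list (map (lsite_weight \<omega> \<omega>H \<omega>V x) \<gamma>)"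
proof -
  let ?R = "{z. fst x + 1 \<le> fst z \<and> fst z \<le> fst y \<and> snd x + 1 \<le> snd z \<and> snd z \<le> snd y}"
  have "lweight \<omega> \<omega>H \<omega>V x y \<gamma> =
      (\<Sum>z\<in>set \<gamma>. (if z \<in> {z. snd z = snd x} - {x} then \<omega>H z else 0)
        + (if z \<in> {z. fst z = fst x} - {x} then \<omega>V z else 0)
        + (if z \<in> ?R then int (\<omega> z) else 0))"
    unfolding lweight_def Int_Diff sum.distrib by (simp add: sum.inter_restrict)
  also have "\<dots> = (\<Sum>z\<in>set \<gamma>. lsite_weight \<omega> \<omega>H \<omega>V x z)"
    by (intro sum.cong) (auto simp: lsite_weight_def prod_eq_iff dest!: dpath_in_box[OF assms])
  finally show ?thesis by (simp add: sum_list_distinct_conv_sum_set dpath_distinct[OF assms])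
qed

lemma lgeodesic_eq_wgeodesic:
  "lgeodesic \<omega> \<omega>H \<omega>V x y = wgeodesic (lsite_weight \<omega> \<omega>H \<omega>V x) x y"
  by (rule ext) (auto simp: lgeodesic_def wgeodesic_def lweight_eq_sum_list)

lemma downmost_pi_minus:
  "cle u v \<Longrightarrow> downmost_wgeodesic (\<lambda>z. int (\<omega> z)) u v (pi_minus \<omega> u v)"
  unfolding pi_minus_def geodesic_eq_wgeodesic downmost_wgeodesic_def[symmetric]
  by (rule theI'[OF ex1_downmost_wgeodesic])

lemma upmost_pi_plus:
  "cle u v \<Longrightarrow> upmost_wgeodesic (\<lambda>z. int (\<omega> z)) u v (pi_plus \<omega> u v)"
  unfolding pi_plus_def geodesic_eq_wgeodesic upmost_wgeodesic_def[symmetric]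
  by (rule theI'[OF ex1_upmost_wgeodesic])

lemma downmost_lpi_minus:
  "cle u v \<Longrightarrow> downmost_wgeodesic (lsite_weight \<omega> \<omega>H \<omega>V u) u v (lpi_minus \<omega> \<omega>H \<omega>V u v)"
  unfolding lpi_minus_def lgeodesic_eq_wgeodesic downmost_wgeodesic_def[symmetric]
  by (rule theI'[OF ex1_downmost_wgeodesic])

lemma upmost_lpi_plus:
  "cle u v \<Longrightarrow> upmost_wgeodesic (lsite_weight \<omega> \<omega>H \<omega>V u) u v (lpi_plus \<omega> \<omega>H \<omega>V u v)"
  unfolding lpi_plus_def lgeodesic_eq_wgeodesic upmost_wgeodesic_def[symmetric]
  by (rule theI'[OF ex1_upmost_wgeodesic])

section \<open>Boundary weights dominate bulk weights\<close>

lemma LPP_ge_pweight: "dpath \<gamma> s y \<Longrightarrow> pweight \<omega> \<gamma> \<le> LPP \<omega> s y"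
  unfolding LPP_def by (rule Max_ge) (auto intro: finite_imageI finite_dpaths)

lemma LPP_attained:
  assumes "cle s y" shows "\<exists>\<gamma>. dpath \<gamma> s y \<and> LPP \<omega> s y = pweight \<omega> \<gamma>"
proof -
  have "pweight \<omega> ` {\<gamma>. dpath \<gamma> s y} \<noteq> {}" using dpath_exists[OF assms] by auto
  then have "LPP \<omega> s y \<in> pweight \<omega> ` {\<gamma>. dpath \<gamma> s y}"
    unfolding LPP_def by (intro Max_in finite_imageI finite_dpaths)
  then show ?thesis by auto
qed

lemma LPP_step:
  assumes "cle s y'" "y = padd y' e1 \<or> y = padd y' e2"
  shows "LPP \<omega> s y' + int (\<omega> y) \<le> LPP \<omega> s y"
proof -
  obtain \<gamma> where \<gamma>: "dpath \<gamma> s y'" "LPP \<omega> s y' = pweight \<omega> \<gamma>"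
    using LPP_attained[OF assms(1)] by blast
  have "y \<notin> set \<gamma>"
    using dpath_in_box[OF \<gamma>(1)] assms(2) by (force simp: padd_def e1_def e2_def)
  then have "pweight \<omega> (\<gamma> @ [y]) = pweight \<omega> \<gamma> + int (\<omega> y)" by (simp add: pweight_def)
  then show ?thesis using LPP_ge_pweight[OF dpath_snoc[OF \<gamma>(1) assms(2)], of \<omega>] \<gamma>(2) by simp
qed

lemma LPP_diag: "int (\<omega> x) \<le> LPP \<omega> x x"
  using LPP_ge_pweight[of "[x]" x x \<omega>] by (simp add: dpath_def pweight_def)

lemma Lfun_ge:
  assumes "fst b < fst x" "bdd_above (Lset \<omega> c b x)" "j \<le> snd x - snd b"
  shows "Lcol c j + LPP \<omega> (fst b + 1, snd b + j) x \<le> Lfun \<omega> c b x"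
proof -
  have "Lcol c j + LPP \<omega> (fst b + 1, snd b + j) x \<in> Lset \<omega> c b x"
    using assms(3) unfolding Lset_def by blast
  then show ?thesis using assms(1,2) by (simp add: Lfun_def cSup_upper)
qed

lemma Lfun_step:
  assumes fin: "\<forall>x. fst b < fst x \<longrightarrow> bdd_above (Lset \<omega> c b x)"
    and x: "x = padd x' e1 \<or> x = padd x' e2" and x': "fst b < fst x'"
  shows "int (\<omega> x) + Lfun \<omega> c b x' \<le> Lfun \<omega> c b x"
proof -
  have bx: "fst b < fst x" using x x' by (auto simp: padd_def e1_def e2_def)
  have "Sup (Lset \<omega> c b x') \<le> Lfun \<omega> c b x - int (\<omega> x)"
  proof (rule cSup_least)
    show "Lset \<omega> c b x' \<noteq> {}" unfolding Lset_def by auto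
  next
    fix l assume "l \<in> Lset \<omega> c b x'"
    then obtain j where j: "j \<le> snd x' - snd b" "l = Lcol c j + LPP \<omega> (fst b + 1, snd b + j) x'"
      unfolding Lset_def by auto
    have "LPP \<omega> (fst b + 1, snd b + j) x' + int (\<omega> x) \<le> LPP \<omega> (fst b + 1, snd b + j) x"
      using x' j(1) x by (intro LPP_step) (auto simp: cle_def)
    moreover have "Lcol c j + LPP \<omega> (fst b + 1, snd b + j) x \<le> Lfun \<omega> c b x"
      using bx fin j(1) x by (intro Lfun_ge) (auto simp: padd_def e1_def e2_def)
    ultimately show "l \<le> Lfun \<omega> c b x - int (\<omega> x)" using j(2) by simp
  qed
  then show ?thesis using x' by (simp add: Lfun_def)
qed

lemma omega_le_omV:
  assumes "\<forall>x. fst b < fst x \<longrightarrow> bdd_above (Lset \<omega> c b x)" "fst b < fst x"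
  shows "int (\<omega> x) \<le> omV \<omega> c b x"
  using Lfun_step[OF assms(1), of x "(fst x, snd x - 1)"] assms(2)
  by (simp add: omV_def padd_def e2_def)

lemma omega_le_omH:
  assumes fin: "\<forall>x. fst b < fst x \<longrightarrow> bdd_above (Lset \<omega> c b x)" and x: "fst b < fst x"
  shows "int (\<omega> x) \<le> omH \<omega> c b x"
proof (cases "fst x - 1 = fst b")
  case True
  then have "(fst b + 1, snd b + (snd x - snd b)) = x" by (simp add: prod_eq_iff)
  then have "Lcol c (snd x - snd b) + LPP \<omega> x x \<le> Lfun \<omega> c b x"
    using Lfun_ge[OF x fin[rule_format, OF x], of "snd x - snd b"] by simp
  then show ?thesis using True LPP_diag[of \<omega> x] by (simp add: omH_def Lfun_def)
next
  case False
  then show ?thesis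
    using Lfun_step[OF fin, of x "(fst x - 1, snd x)"] x by (simp add: omH_def padd_def e1_def)
qed

lemma omega_le_lsite_weight:
  assumes "\<forall>x. fst b < fst x \<longrightarrow> bdd_above (Lset \<omega> c b x)" "fst b < fst u"
    and "z \<noteq> u" "fst u \<le> fst z"
  shows "int (\<omega> z) \<le> lsite_weight \<omega> (omH \<omega> c b) (omV \<omega> c b) u z"
  using assms omega_le_omH[OF assms(1)] omega_le_omV[OF assms(1)]
  by (simp add: lsite_weight_def)

lemma lsite_weight_interior:
  "fst z \<noteq> fst u \<Longrightarrow> snd z \<noteq> snd u \<Longrightarrow> lsite_weight \<omega> \<omega>H \<omega>V u z = int (\<omega> z)"
  by (auto simp: lsite_weight_def)

lemma dpath_nth_1:
  assumes "dpath \<gamma> x y" "p \<in> set \<gamma>" "antidiag p = antidiag x + 1"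
  shows "\<gamma>!1 = p"
proof -
  obtain k where k: "k < length \<gamma>" "\<gamma>!k = p" using assms(2) by (auto simp: in_set_conv_nth)
  then have "k = 1" using dpath_antidiag_nth[OF assms(1) k(1)] assms(3) by simp
  then show ?thesis using k(2) by simp
qed

lemma crossing_after_right_step:
  assumes g: "dpath g u v" and e: "dpath e u v" and right: "padd u e1 \<in> set e"
    and i: "i < length g" and cross: "fst (e!i) < fst (g!i)"
  shows "g!i \<noteq> u \<and> fst u \<le> fst (g!i) \<and> fst u < fst (e!i) \<and> snd u < snd (e!i)"
proof -
  have ie: "i < length e" using i dpath_same_length[OF g e] by simp
  have "i \<noteq> 0"
  proof
    assume "i = 0"
    then show False using cross dpath_nth_0[OF g] dpath_nth_0[OF e] by simp
  qed
  have "e!1 = padd u e1" using dpath_nth_1[OF e right] by (simp add: antidiag_def padd_def e1_def)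
  then have "fst u < fst (e!i)"
    using dpath_nth_mono[OF e, of 1 i] \<open>i \<noteq> 0\<close> ie by (simp add: padd_def e1_def)
  moreover have "antidiag (e!i) = antidiag (g!i)" "antidiag (g!i) \<noteq> antidiag u"
    using dpath_antidiag_nth[OF e ie] dpath_antidiag_nth[OF g i] \<open>i \<noteq> 0\<close> by simp_all
  moreover have "fst u \<le> fst (g!i)" "snd u \<le> snd (g!i)" using dpath_in_box[OF g nth_mem[OF i]] by simp_all
  ultimately show ?thesis using cross by (auto simp: antidiag_def)
qed

lemma crossing_after_up_step:
  assumes g: "dpath g u v" and e: "dpath e u v" and up: "padd u e2 \<in> set e"
    and i: "i < length g" and cross: "fst (g!i) < fst (e!i)"
  shows "g!i \<noteq> u \<and> fst u \<le> fst (g!i) \<and> fst u < fst (e!i) \<and> snd u < snd (e!i)"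
proof -
  have ie: "i < length e" using i dpath_same_length[OF g e] by simp
  have "i \<noteq> 0"
  proof
    assume "i = 0"
    then show False using cross dpath_nth_0[OF g] dpath_nth_0[OF e] by simp
  qed
  have "e!1 = padd u e2" using dpath_nth_1[OF e up] by (simp add: antidiag_def padd_def e2_def)
  then have "snd u < snd (e!i)"
    using dpath_nth_mono[OF e, of 1 i] \<open>i \<noteq> 0\<close> ie by (simp add: padd_def e2_def)
  moreover have "antidiag (g!i) \<noteq> antidiag u"
    using dpath_antidiag_nth[OF g i] \<open>i \<noteq> 0\<close> by simp
  moreover have "fst u \<le> fst (g!i)" using dpath_in_box[OF g nth_mem[OF i]] by simp
  ultimately show ?thesis using cross by auto
qed

theorem lemma3p4:
  fixes \<omega> :: "pt \<Rightarrow> nat" and c :: "int \<Rightarrow> nat" and b u v :: pt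
  assumes fin: "\<forall>x. fst b < fst x \<longrightarrow> bdd_above (Lset \<omega> c b x)"
    and bu: "fst b < fst u"
    and uv: "cle u v"
  shows "(padd u e1 \<in> set (lpi_minus \<omega> (omH \<omega> c b) (omV \<omega> c b) u v) \<longrightarrow>
            above (pi_minus \<omega> u v) (lpi_minus \<omega> (omH \<omega> c b) (omV \<omega> c b) u v))
       \<and> (padd u e2 \<in> set (lpi_plus \<omega> (omH \<omega> c b) (omV \<omega> c b) u v) \<longrightarrow>
            above (lpi_plus \<omega> (omH \<omega> c b) (omV \<omega> c b) u v) (pi_plus \<omega> u v))"
proof -
  let ?w = "\<lambda>z. int (\<omega> z)" and ?f = "lsite_weight \<omega> (omH \<omega> c b) (omV \<omega> c b) u"
  have exchange: "?w a + ?f z \<le> ?f a + ?w z"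
    if "a \<noteq> u \<and> fst u \<le> fst a \<and> fst u < fst z \<and> snd u < snd z" for a z
    using that omega_le_lsite_weight[OF fin bu, of a] lsite_weight_interior[of z u] by simp
  let ?e_minus = "lpi_minus \<omega> (omH \<omega> c b) (omV \<omega> c b) u v"
    and ?e_plus = "lpi_plus \<omega> (omH \<omega> c b) (omV \<omega> c b) u v"
  have g_minus: "wgeodesic ?w u v (pi_minus \<omega> u v)" and g_plus: "wgeodesic ?w u v (pi_plus \<omega> u v)"
    using downmost_pi_minus[OF uv] upmost_pi_plus[OF uv]
    by (auto simp: downmost_wgeodesic_def upmost_wgeodesic_def)
  have e_minus: "downmost_wgeodesic ?f u v ?e_minus" and e_plus: "upmost_wgeodesic ?f u v ?e_plus"
    using downmost_lpi_minus[OF uv] upmost_lpi_plus[OF uv] by blast+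
  have d_minus: "dpath (pi_minus \<omega> u v) u v" "dpath ?e_minus u v"
    and d_plus: "dpath (pi_plus \<omega> u v) u v" "dpath ?e_plus u v"
    using g_minus g_plus e_minus e_plus
    by (auto simp: downmost_wgeodesic_def upmost_wgeodesic_def wgeodesic_def)
  show ?thesis
  proof (intro conjI impI)
    assume "padd u e1 \<in> set ?e_minus"
    note crossing = crossing_after_right_step[OF d_minus this]
    show "above (pi_minus \<omega> u v) ?e_minus"
      by (rule wgeodesic_above_downmost[OF g_minus e_minus]) (use crossing exchange in blast)
  next
    assume "padd u e2 \<in> set ?e_plus"
    note crossing = crossing_after_up_step[OF d_plus this]
    show "above ?e_plus (pi_plus \<omega> u v)"
      by (rule upmost_above_wgeodesic[OF g_plus e_plus]) (use crossing exchange in blast)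
  qed
qed

end
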